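(* Let $N\ge 1$ be an integer, $\Omega>0$, $\bar\gamma>0$, and consider the high-SNR asymptotic delay-tolerant throughput $$\tilde\rho(\tau)=\frac{1-\tau}{\ln 2}\left[2\psi(N)+\ln\bar\gamma+2\ln\Omega-\ln\!\left(\frac{1-\tau}{\tau}\right)\right],\qquad \tau\in(0,1).$$ Then the throughput-optimal energy harvesting time, i.e. the maximizer of $\tilde\rho$ over $(0,1)$, is $$\tau_{tol}^*=\frac{1}{1+W\!\left(\bar\gamma\,\Omega^2 e^{2\psi(N)-1}\right)}.$$ *)

theory Defs
  imports "HOL-Analysis.Analysis"
begin

text \<open>Principal branch of the Lambert W function (the branch with W x \<ge> -1),
  defined for x \<ge> -exp(-1) as the unique w \<ge> -1 with w * exp w = x.\<close>
definition Lambert_W :: "real \<Rightarrow> real" where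
  "Lambert_W x = (THE w. w \<ge> -1 \<and> w * exp w = x)"

definition rho_tilde :: "nat \<Rightarrow> real \<Rightarrow> real \<Rightarrow> real \<Rightarrow> real" where
  "rho_tilde N \<Omega> \<gamma> \<tau> =
     (1 - \<tau>) / ln 2 * (2 * Digamma (real N) + ln \<gamma> + 2 * ln \<Omega> - ln ((1 - \<tau>) / \<tau>))"

end

theory Submission
  imports Defs
begin

text \<open>Substituting \<open>x = (1 - \<tau>) / \<tau>\<close>, so that \<open>1 - \<tau> = x / (1 + x)\<close>, the bracket of
  \<open>\<tilde>\<rho>\<close> becomes \<open>ln a + 1 - ln x\<close> with \<open>a = \<gamma> \<Omega>\<^sup>2 e\<^bsup>2\<psi>(N) - 1\<^esup>\<close>. Writing \<open>a = x\<^sub>0 e\<^bsup>x\<^sub>0\<^esup>\<close>,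
  i.e. \<open>x\<^sub>0 = W(a)\<close>, the strict concavity of the logarithm gives
  \<open>ln x\<^sub>0 - ln x < x\<^sub>0 / x - 1\<close> for \<open>x \<noteq> x\<^sub>0\<close>, hence
  \<open>(1 - \<tau>)(ln a + 1 - ln x) < (1 - \<tau>)(x\<^sub>0 / x + x\<^sub>0) = x\<^sub>0\<close>,
  with equality exactly at \<open>x = x\<^sub>0\<close>, i.e. \<open>\<tau> = 1 / (1 + x\<^sub>0)\<close>.\<close>

lemma mult_exp_strict_mono:
  fixes v w :: real
  assumes "0 \<le> v" "v < w"
  shows "v * exp v < w * exp w"
proof -
  have "v * exp v \<le> v * exp w" using assms by (simp add: mult_left_mono)
  also have "\<dots> < w * exp w" using assms by simp
  finally show ?thesis .
qed

lemma Lambert_W_mult_exp: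
  fixes w :: real
  assumes "0 \<le> w"
  shows "Lambert_W (w * exp w) = w"
  unfolding Lambert_W_def
proof (rule the_equality)
  show "w \<ge> -1 \<and> w * exp w = w * exp w" using assms by simp
next
  fix v assume v: "v \<ge> -1 \<and> v * exp v = w * exp w"
  have "0 \<le> v"
  proof (rule ccontr)
    assume "\<not> 0 \<le> v"
    then have "v * exp v < 0" by (simp add: mult_neg_pos)
    moreover have "0 \<le> w * exp w" using assms by simp
    ultimately show False using v by simp
  qed
  with v assms show "v = w"
    using mult_exp_strict_mono[of v w] mult_exp_strict_mono[of w v]
    by (metis less_irrefl linorder_neqE_linordered_idom)
qed

lemma Lambert_W_pos:
  fixes a :: real
  assumes "0 < a"
  shows "0 < Lambert_W a" and "Lambert_W a * exp (Lambert_W a) = a"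
proof -
  have "\<exists>w. 0 \<le> w \<and> w \<le> a \<and> w * exp w = a"
    using assms by (intro IVT) (auto intro!: continuous_intros)
  then obtain w where w: "0 \<le> w" "w * exp w = a" by blast
  then have W: "Lambert_W a = w" using Lambert_W_mult_exp by blast
  show "Lambert_W a * exp (Lambert_W a) = a" using W w by simp
  show "0 < Lambert_W a" using W w assms by (cases "w = 0") auto
qed

lemma weighted_log_gap_at_max:
  fixes x\<^sub>0 :: real
  assumes "0 < x\<^sub>0"
  defines "\<tau> \<equiv> 1 / (1 + x\<^sub>0)"
  shows "(1 - \<tau>) * (ln x\<^sub>0 + x\<^sub>0 + 1 - ln ((1 - \<tau>) / \<tau>)) = x\<^sub>0"
proof -
  have ratio: "(1 - \<tau>) / \<tau> = x\<^sub>0" and weight: "1 - \<tau> = x\<^sub>0 / (1 + x\<^sub>0)"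
    using assms by (simp_all add: field_simps)
  have "(1 - \<tau>) * (ln x\<^sub>0 + x\<^sub>0 + 1 - ln ((1 - \<tau>) / \<tau>)) = x\<^sub>0 / (1 + x\<^sub>0) * (1 + x\<^sub>0)"
    unfolding ratio by (simp add: weight add.commute)
  then show ?thesis using assms by simp
qed

lemma weighted_log_gap_less:
  fixes x\<^sub>0 \<tau> :: real
  assumes "0 < x\<^sub>0" "0 < \<tau>" "\<tau> < 1" "\<tau> \<noteq> 1 / (1 + x\<^sub>0)"
  shows "(1 - \<tau>) * (ln x\<^sub>0 + x\<^sub>0 + 1 - ln ((1 - \<tau>) / \<tau>)) < x\<^sub>0"
proof -
  define x where "x = (1 - \<tau>) / \<tau>"
  have "0 < x" using assms unfolding x_def by simp
  have "x \<noteq> x\<^sub>0"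
  proof
    assume "x = x\<^sub>0"
    then have "\<tau> * (1 + x\<^sub>0) = 1" using assms unfolding x_def by (simp add: field_simps)
    then show False using assms by (simp add: eq_divide_eq)
  qed
  then have "ln x\<^sub>0 - ln x < (x\<^sub>0 - x) / x"
    using ln_diff_less \<open>0 < x\<close> assms(1) by blast
  then have "ln x\<^sub>0 + x\<^sub>0 + 1 - ln x < x\<^sub>0 / x + x\<^sub>0"
    using \<open>0 < x\<close> by (simp add: diff_divide_distrib)
  then have "(1 - \<tau>) * (ln x\<^sub>0 + x\<^sub>0 + 1 - ln x) < (1 - \<tau>) * (x\<^sub>0 / x + x\<^sub>0)"
    using assms by (intro mult_strict_left_mono) auto
  also have "\<dots> = x\<^sub>0" using assms unfolding x_def by (simp add: field_simps)
  finally show ?thesis unfolding x_def .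
qed

lemma rho_tilde_eq:
  assumes "0 < \<Omega>" "0 < \<gamma>"
  shows "rho_tilde N \<Omega> \<gamma> \<tau> = (1 - \<tau>) / ln 2 *
           (ln (\<gamma> * \<Omega>\<^sup>2 * exp (2 * Digamma (real N) - 1)) + 1 - ln ((1 - \<tau>) / \<tau>))"
  using assms by (simp add: rho_tilde_def ln_mult ln_realpow)

theorem proposition2:
  fixes N :: nat and \<Omega> \<gamma> :: real
  assumes "N \<ge> 1" and "\<Omega> > 0" and "\<gamma> > 0"
  defines "\<tau>opt \<equiv> 1 / (1 + Lambert_W (\<gamma> * \<Omega>\<^sup>2 * exp (2 * Digamma (real N) - 1)))"
  shows "\<tau>opt \<in> {0<..<1} \<and>
         (\<forall>\<tau>\<in>{0<..<1}. \<tau> \<noteq> \<tau>opt \<longrightarrow> rho_tilde N \<Omega> \<gamma> \<tau> < rho_tilde N \<Omega> \<gamma> \<tau>opt)"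
proof -
  define a where "a = \<gamma> * \<Omega>\<^sup>2 * exp (2 * Digamma (real N) - 1)"
  define x\<^sub>0 where "x\<^sub>0 = Lambert_W a"
  have "0 < a" using assms unfolding a_def by simp
  then have "0 < x\<^sub>0" and "ln a = ln x\<^sub>0 + x\<^sub>0"
    using Lambert_W_pos[of a] ln_mult[of x\<^sub>0 "exp x\<^sub>0"] unfolding x\<^sub>0_def by auto
  then have rho: "rho_tilde N \<Omega> \<gamma> \<tau> =
      (1 - \<tau>) * (ln x\<^sub>0 + x\<^sub>0 + 1 - ln ((1 - \<tau>) / \<tau>)) / ln 2" for \<tau>
    using rho_tilde_eq[OF assms(2,3)] unfolding a_def by simp
  have opt: "\<tau>opt = 1 / (1 + x\<^sub>0)" unfolding \<tau>opt_def x\<^sub>0_def a_def ..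
  have "\<tau>opt \<in> {0<..<1}" using \<open>0 < x\<^sub>0\<close> unfolding opt by (simp add: divide_less_eq)
  moreover have "rho_tilde N \<Omega> \<gamma> \<tau> < rho_tilde N \<Omega> \<gamma> \<tau>opt"
    if "\<tau> \<in> {0<..<1}" "\<tau> \<noteq> \<tau>opt" for \<tau>
    using weighted_log_gap_less[of x\<^sub>0 \<tau>] weighted_log_gap_at_max[OF \<open>0 < x\<^sub>0\<close>] that \<open>0 < x\<^sub>0\<close>
    unfolding rho opt by (simp add: divide_strict_right_mono)
  ultimately show ?thesis by blast
qed

end
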